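(* For all $r\ge3$, $$\sum_{N>0}\dim_{\mathbb Q}\ker\big(E^{(2)}_{N,r}\cdots E^{(r-1)}_{N,r}\big)\,x^N=\mathbb O(x)\sum_{N>0}\dim_{\mathbb Q}\ker C_{N,r-1}\,x^N.$$
   Context: For integers $N,r\ge1$ let $S_{N,r}=\{(n_1,\dots,n_r)\in\mathbb Z^r:\ n_1+\dots+n_r=N,\ \text{each } n_i\ge3 \text{ odd}\}$; when used as an index set it is ordered lexicographically decreasingly. For $m=(m_1,\dots,m_r)$ and $n=(n_1,\dots,n_r)$ let $\delta\binom{m}{n}=1$ if $m_i=n_i$ for all $i$, and $0$ otherwise. Ihara action: for $f\in\mathbb Q[t]$ and a polynomial $g$ in $r-1$ variables, $(f\mathbin{\underline\circ}g)(x_1,\dots,x_r)=f(x_1)g(x_2,\dots,x_r)+\sum_{i=1}^{r-1}\big(f(x_{i+1}-x_i)g(x_1,\dots,\widehat{x_{i+1}},\dots,x_r)-(-1)^{\deg f}f(x_i-x_{i+1})g(x_1,\dots,\widehat{x_i},\dots,x_r)\big)$ (hats denote omitted variables). For positive integers $m_i,n_i$, $e\binom{m_1,\dots,m_r}{n_1,\dots,n_r}$ is the coefficient of $x_1^{n_1-1}\cdots x_r^{n_r-1}$ in $t^{m_1-1}\mathbin{\underline\circ}\,(y_1^{m_2-1}\cdots y_{r-1}^{m_r-1})$. $E_{N,r}$ is the $S_{N,r}\times S_{N,r}$ matrix with $(m,n)$-entry $e\binom{m}{n}$. For $2\le j\le r$, $E^{(j)}_{N,r}$ is the $S_{N,r}\times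 S_{N,r}$ matrix with $(m,n)$-entry $\delta\binom{m_1,\dots,m_{r-j}}{n_1,\dots,n_{r-j}}\,e\binom{m_{r-j+1},\dots,m_r}{n_{r-j+1},\dots,n_r}$ (so $E^{(r)}_{N,r}=E_{N,r}$). $C_{N,r}=E^{(2)}_{N,r}E^{(3)}_{N,r}\cdots E^{(r-1)}_{N,r}E_{N,r}$ (so $C_{N,2}=E_{N,2}$). For a matrix $A$, $\ker A$ denotes its right kernel. $\mathbb O(x)=\frac{x^3}{1-x^2}$. *)

theory Defs
  imports "HOL-Library.Poly_Mapping" "HOL-Library.List_Lexorder"
    "HOL-Computational_Algebra.Polynomial"
    "HOL-Computational_Algebra.Formal_Power_Series"
    "Jordan_Normal_Form.Matrix_Kernel"
begin

section \<open>Multivariate polynomials over Q in variables x_1, x_2, ... (0-based index)\<close>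

type_synonym mpoly = "(nat \<Rightarrow>\<^sub>0 nat) \<Rightarrow>\<^sub>0 rat"

definition mvar :: "nat \<Rightarrow> mpoly" where
  "mvar i = Poly_Mapping.single (Poly_Mapping.single i 1) 1"

definition mconst :: "rat \<Rightarrow> mpoly" where
  "mconst c = Poly_Mapping.single 0 c"

definition eval_at :: "rat poly \<Rightarrow> mpoly \<Rightarrow> mpoly" where
  "eval_at f q = poly (map_poly mconst f) q"

definition ins_gap :: "nat \<Rightarrow> (nat \<Rightarrow>\<^sub>0 nat) \<Rightarrow> (nat \<Rightarrow>\<^sub>0 nat)" where
  "ins_gap i \<alpha> = Abs_poly_mapping (\<lambda>j. if j < i then Poly_Mapping.lookup \<alpha> j
                                       else if j = i then 0 else Poly_Mapping.lookup \<alpha> (j - 1))"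

text \<open>g(x_1,...,hat x_(i+1),...,x_r) (0-based: variable i omitted).\<close>
definition subst_skip :: "nat \<Rightarrow> mpoly \<Rightarrow> mpoly" where
  "subst_skip i g = (\<Sum>\<alpha>\<in>Poly_Mapping.keys g. Poly_Mapping.single (ins_gap i \<alpha>) (Poly_Mapping.lookup g \<alpha>))"

text \<open>Ihara action f \<circ> g, with g a polynomial in r-1 variables, result in r variables.\<close>
definition ihara :: "rat poly \<Rightarrow> nat \<Rightarrow> mpoly \<Rightarrow> mpoly" where
  "ihara f r g = eval_at f (mvar 0) * subst_skip 0 g
     + (\<Sum>i<r - 1. eval_at f (mvar (i + 1) - mvar i) * subst_skip (i + 1) g
                   - (-1) ^ degree f * eval_at f (mvar i - mvar (i + 1)) * subst_skip i g)"

definition mono_m1 :: "nat list \<Rightarrow> (nat \<Rightarrow>\<^sub>0 nat)" where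
  "mono_m1 ks = Poly_Mapping.nth (map (\<lambda>k. k - 1) ks)"

text \<open>e(m; n): coefficient of x_1^(n_1-1)...x_r^(n_r-1) in t^(m_1-1) \<circ> y_1^(m_2-1)...y_(r-1)^(m_r-1).\<close>
definition ecoef :: "nat list \<Rightarrow> nat list \<Rightarrow> rat" where
  "ecoef m n = Poly_Mapping.lookup (ihara (monom 1 (hd m - 1)) (length m)
                        (Poly_Mapping.single (mono_m1 (tl m)) 1)) (mono_m1 n)"

definition S :: "nat \<Rightarrow> nat \<Rightarrow> nat list set" where
  "S N r = {ns. length ns = r \<and> sum_list ns = N \<and> (\<forall>k\<in>set ns. k \<ge> 3 \<and> odd k)}"

text \<open>S_{N,r} listed in lexicographically decreasing order.\<close>
definition Slist :: "nat \<Rightarrow> nat \<Rightarrow> nat list list" where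
  "Slist N r = rev (sorted_list_of_set (S N r))"

definition Sidx_mat :: "nat \<Rightarrow> nat \<Rightarrow> (nat list \<Rightarrow> nat list \<Rightarrow> rat) \<Rightarrow> rat mat" where
  "Sidx_mat N r F = (let L = Slist N r in mat (length L) (length L) (\<lambda>(a, b). F (L ! a) (L ! b)))"

definition E_mat :: "nat \<Rightarrow> nat \<Rightarrow> rat mat" where
  "E_mat N r = Sidx_mat N r ecoef"

definition Ej_mat :: "nat \<Rightarrow> nat \<Rightarrow> nat \<Rightarrow> rat mat" where
  "Ej_mat j N r = Sidx_mat N r (\<lambda>m n.
      (if take (r - j) m = take (r - j) n then 1 else 0) * ecoef (drop (r - j) m) (drop (r - j) n))"

definition Eprod :: "nat \<Rightarrow> nat \<Rightarrow> nat \<Rightarrow> rat mat" where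
  "Eprod k N r = foldr (\<lambda>j A. Ej_mat j N r * A) [2..<k + 1] (1\<^sub>m (card (S N r)))"

definition C_mat :: "nat \<Rightarrow> nat \<Rightarrow> rat mat" where
  "C_mat N r = Eprod (r - 1) N r * E_mat N r"

definition obs :: "rat fps" where
  "obs = fps_X ^ 3 / (1 - fps_X ^ 2)"

end

theory Submission
  imports Defs
begin

text \<open>For \<open>k < r\<close> the matrices \<open>E^(2)_{N,r}, ..., E^(k)_{N,r}\<close> never touch the first entry
  \<open>n_1\<close> of an index, so their product is block diagonal with one block for each odd \<open>h \<ge> 3\<close>,
  the block \<open>n_1 = h\<close> being \<open>E^(2)_{N-h,r-1} ... E^(k)_{N-h,r-1}\<close>. For \<open>k = r - 1\<close> this block is
  \<open>C_{N-h,r-1}\<close>, so the kernel dimension in degree \<open>N\<close> is \<open>\<Sum>_h dim ker C_{N-h,r-1}\<close>, the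
  coefficient of \<open>x^N\<close> in the product with \<open>O(x) = x^3 + x^5 + x^7 + ...\<close>.\<close>

definition list_mat :: "('a \<Rightarrow> 'a \<Rightarrow> 'b) \<Rightarrow> 'a list \<Rightarrow> 'b mat" where
  "list_mat F L = mat (length L) (length L) (\<lambda>(i, j). F (L ! i) (L ! j))"

lemma list_mat_carrier: "list_mat F L \<in> carrier_mat (length L) (length L)"
  unfolding list_mat_def by simp

lemma kernel_dim_list_mat: "kernel_dim (list_mat F L) = kernel.dim (length L) (list_mat F L)"
  unfolding kernel_dim_def list_mat_def by simp

lemma list_mat_map: "list_mat F (map h L) = list_mat (\<lambda>a b. F (h a) (h b)) L"
  by (rule eq_matI) (auto simp: list_mat_def)

lemma list_mat_append:
  assumes "\<And>a b. a \<in> set X \<Longrightarrow> b \<in> set Y \<Longrightarrow> F a b = 0 \<and> F b a = 0"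
  shows "list_mat F (X @ Y) =
    four_block_mat (list_mat F X) (0\<^sub>m (length X) (length Y)) (0\<^sub>m (length Y) (length X)) (list_mat F Y)"
  by (rule eq_matI) (use assms in \<open>auto simp: list_mat_def nth_append\<close>)

lemma list_mat_mult:
  fixes F G :: "'a \<Rightarrow> 'a \<Rightarrow> 'b::comm_semiring_0"
  assumes "distinct L"
  shows "list_mat F L * list_mat G L = list_mat (\<lambda>m n. \<Sum>p\<in>set L. F m p * G p n) L"
proof (rule eq_matI)
  have sum_nth: "(\<Sum>t = 0..<length L. f (L ! t)) = (\<Sum>p\<in>set L. f p)" for f :: "'a \<Rightarrow> 'b"
    using sum_list_sum_nth[of "map f L"] assms by (simp add: sum_list_distinct_conv_sum_set)
  fix i j assume "i < dim_row (list_mat (\<lambda>m n. \<Sum>p\<in>set L. F m p * G p n) L)"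
    and "j < dim_col (list_mat (\<lambda>m n. \<Sum>p\<in>set L. F m p * G p n) L)"
  then show "(list_mat F L * list_mat G L) $$ (i, j)
           = list_mat (\<lambda>m n. \<Sum>p\<in>set L. F m p * G p n) L $$ (i, j)"
    using sum_nth[of "\<lambda>p. F (L ! i) p * G p (L ! j)"] by (simp add: list_mat_def scalar_prod_def)
qed (auto simp: list_mat_def)

lemma list_mat_one:
  assumes "distinct L"
  shows "1\<^sub>m (length L) = list_mat (\<lambda>m n. if m = n then 1 else 0) L"
  by (rule eq_matI) (auto simp: list_mat_def nth_eq_iff_index_eq[OF assms])

lemma kernel_dim_list_mat_concat:
  fixes F :: "'a \<Rightarrow> 'a \<Rightarrow> 'b::field"
  assumes "distinct ks"
    and "\<And>k l a b. k \<in> set ks \<Longrightarrow> l \<in> set ks \<Longrightarrow> k \<noteq> l \<Longrightarrow> a \<in> set (B k) \<Longrightarrow> b \<in> set (B l)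
           \<Longrightarrow> F a b = 0"
  shows "kernel_dim (list_mat F (concat (map B ks))) = (\<Sum>k\<leftarrow>ks. kernel_dim (list_mat F (B k)))"
  using assms
proof (induction ks)
  case Nil
  show ?case by (simp add: list_mat_def kernel_dim_code)
next
  case (Cons k ks)
  let ?R = "concat (map B ks)"
  have "list_mat F (B k @ ?R) =
    four_block_mat (list_mat F (B k)) (0\<^sub>m (length (B k)) (length ?R))
      (0\<^sub>m (length ?R) (length (B k))) (list_mat F ?R)"
    by (rule list_mat_append) (use Cons.prems in fastforce)
  then have "kernel_dim (list_mat F (B k @ ?R))
      = kernel_dim (list_mat F (B k)) + kernel_dim (list_mat F ?R)"
    unfolding kernel_dim_list_mat length_append
    by (rule kernel_four_block_0_mat[OF _ list_mat_carrier list_mat_carrier])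
  also have "kernel_dim (list_mat F ?R) = (\<Sum>k\<leftarrow>ks. kernel_dim (list_mat F (B k)))"
    using Cons by (intro Cons.IH) auto
  finally show ?case
    by simp
qed

lemma kernel_dim_dim_col_0: "dim_col A = 0 \<Longrightarrow> kernel_dim A = 0"
  by (simp add: kernel_dim_code)

lemma foldr_mult_mat_carrier:
  assumes "\<And>j. j \<in> set js \<Longrightarrow> M j \<in> carrier_mat n n" "B \<in> carrier_mat n n"
  shows "foldr (\<lambda>j A. M j * A) js B \<in> carrier_mat n n"
  using assms by (induction js) (auto intro!: mult_carrier_mat)

lemma foldr_mult_mat_assoc:
  fixes M :: "nat \<Rightarrow> 'a::semiring_1 mat"
  assumes "\<And>j. j \<in> set js \<Longrightarrow> M j \<in> carrier_mat n n" "B \<in> carrier_mat n n"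
  shows "foldr (\<lambda>j A. M j * A) js B = foldr (\<lambda>j A. M j * A) js (1\<^sub>m n) * B"
  using assms(1)
proof (induction js)
  case Nil
  show ?case using assms(2) by simp
next
  case (Cons j js)
  have "foldr (\<lambda>j A. M j * A) js (1\<^sub>m n) \<in> carrier_mat n n"
    using Cons.prems by (intro foldr_mult_mat_carrier) auto
  then show ?case
    using Cons assms(2) by (simp add: assoc_mult_mat[of _ n n _ n _ n])
qed

lemma finite_S: "finite (S N r)"
proof (rule finite_subset)
  show "S N r \<subseteq> {xs. set xs \<subseteq> {0..N} \<and> length xs = r}"
    unfolding S_def using member_le_sum_list by fastforce
qed (rule finite_lists_length_eq, simp)

lemma Cons_in_S_Suc:
  "k # q \<in> S N (Suc r) \<longleftrightarrow> 3 \<le> k \<and> odd k \<and> k \<le> N \<and> q \<in> S (N - k) r"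
  unfolding S_def by auto

lemma S_zero: "S 0 (Suc r) = {}"
  by (auto simp: S_def length_Suc_conv)

lemma S_Suc: "S N (Suc r) = (\<Union>k\<in>{k. 3 \<le> k \<and> odd k \<and> k \<le> N}. Cons k ` S (N - k) r)"
proof (intro equalityI subsetI)
  fix p assume p: "p \<in> S N (Suc r)"
  then obtain k q where "p = k # q"
    by (cases p) (auto simp: S_def)
  with p show "p \<in> (\<Union>k\<in>{k. 3 \<le> k \<and> odd k \<and> k \<le> N}. Cons k ` S (N - k) r)"
    by (auto simp: Cons_in_S_Suc)
qed (auto simp: Cons_in_S_Suc)

lemma sum_S_Suc_hd:
  assumes "3 \<le> k" "odd k" "k \<le> N" "\<And>p. p \<in> S N (Suc r) \<Longrightarrow> hd p \<noteq> k \<Longrightarrow> f p = 0"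
  shows "(\<Sum>p\<in>S N (Suc r). f p) = (\<Sum>q\<in>S (N - k) r. f (k # q))"
proof -
  have "(\<Sum>p\<in>S N (Suc r). f p) = (\<Sum>p\<in>Cons k ` S (N - k) r. f p)"
  proof (rule sum.mono_neutral_right[OF finite_S])
    show "Cons k ` S (N - k) r \<subseteq> S N (Suc r)"
      using assms by (auto simp: Cons_in_S_Suc)
    show "\<forall>p\<in>S N (Suc r) - Cons k ` S (N - k) r. f p = 0"
    proof
      fix p assume p: "p \<in> S N (Suc r) - Cons k ` S (N - k) r"
      then obtain x q where "p = x # q"
        by (cases p) (auto simp: S_def)
      with p have "hd p \<noteq> k"
        by (auto simp: Cons_in_S_Suc)
      with p show "f p = 0"
        using assms(4) by blast
    qed
  qed
  also have "\<dots> = (\<Sum>q\<in>S (N - k) r. f (k # q))"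
    by (simp add: sum.reindex)
  finally show ?thesis .
qed

lemma distinct_Slist: "distinct (Slist N r)"
  and set_Slist: "set (Slist N r) = S N r"
  and length_Slist: "length (Slist N r) = card (S N r)"
  unfolding Slist_def using finite_S by (auto simp: distinct_card[symmetric])

lemma Slist_Suc:
  "Slist N (Suc r) = concat (map (\<lambda>k. map (Cons k) (Slist (N - k) r)) (rev (filter odd [3..<Suc N])))"
proof -
  define ks where "ks = filter odd [3..<Suc N]"
  define L where "L = concat (map (\<lambda>k. map (Cons k) (sorted_list_of_set (S (N - k) r))) ks)"
  have "sorted_wrt (<) ks"
    unfolding ks_def by (rule sorted_wrt_filter[OF sorted_wrt_upt])
  then have "sorted_wrt (<) L"
    unfolding L_def by (induction ks) (auto simp: sorted_wrt_append sorted_wrt_map)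
  moreover have "set L = S N (Suc r)"
    unfolding L_def ks_def S_Suc using finite_S by auto
  ultimately have "sorted_list_of_set (S N (Suc r)) = L"
    by (metis sorted_list_of_set.idem_if_sorted_distinct strict_sorted_iff)
  then show ?thesis
    unfolding Slist_def L_def ks_def by (simp add: rev_concat rev_map o_def)
qed

definition Ej_entry :: "nat \<Rightarrow> nat \<Rightarrow> nat list \<Rightarrow> nat list \<Rightarrow> rat" where
  "Ej_entry j r m n =
    (if take (r - j) m = take (r - j) n then 1 else 0) * ecoef (drop (r - j) m) (drop (r - j) n)"

definition Eprod_entry :: "nat list \<Rightarrow> nat \<Rightarrow> nat \<Rightarrow> nat list \<Rightarrow> nat list \<Rightarrow> rat" where
  "Eprod_entry js N r =
    foldr (\<lambda>j A m n. \<Sum>p\<in>S N r. Ej_entry j r m p * A p n) js (\<lambda>m n. if m = n then 1 else 0)"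

lemma Sidx_mat_eq_list_mat: "Sidx_mat N r F = list_mat F (Slist N r)"
  unfolding Sidx_mat_def list_mat_def Let_def by simp

lemma Sidx_mat_carrier: "Sidx_mat N r F \<in> carrier_mat (card (S N r)) (card (S N r))"
  using list_mat_carrier by (metis Sidx_mat_eq_list_mat length_Slist)

lemma dim_col_Sidx_mat: "dim_col (Sidx_mat N r F) = card (S N r)"
  using Sidx_mat_carrier by blast

lemma Eprod_eq_Sidx_mat: "Eprod k N r = Sidx_mat N r (Eprod_entry [2..<k + 1] N r)"
proof -
  have "foldr (\<lambda>j A. Ej_mat j N r * A) js (1\<^sub>m (card (S N r))) = Sidx_mat N r (Eprod_entry js N r)"
    for js
    by (induction js)
      (simp_all add: Eprod_entry_def Ej_mat_def Ej_entry_def Sidx_mat_eq_list_mat list_mat_mult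
        list_mat_one distinct_Slist set_Slist flip: length_Slist)
  then show ?thesis
    unfolding Eprod_def .
qed

lemma Eprod_eq_C_mat:
  assumes "2 \<le> s"
  shows "Eprod s N s = C_mat N s"
proof -
  let ?M = "\<lambda>j. Ej_mat j N s" and ?n = "card (S N s)"
  have M_carrier: "?M j \<in> carrier_mat ?n ?n" for j
    unfolding Ej_mat_def by (rule Sidx_mat_carrier)
  have "Eprod s N s = foldr (\<lambda>j A. ?M j * A) [2..<s] (?M s * 1\<^sub>m ?n)"
    unfolding Eprod_def using assms by simp
  also have "\<dots> = Eprod (s - 1) N s * ?M s"
    using assms M_carrier[of s]
    by (subst foldr_mult_mat_assoc[OF M_carrier]) (auto simp: Eprod_def)
  also have "?M s = E_mat N s"
    unfolding Ej_mat_def E_mat_def by simp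
  finally show ?thesis
    unfolding C_mat_def .
qed

lemma Ej_entry_Cons:
  assumes "j \<le> r"
  shows "Ej_entry j (Suc r) (k # a) (l # b) = (if k = l then Ej_entry j r a b else 0)"
  using assms by (simp add: Ej_entry_def Suc_diff_le)

lemma Eprod_entry_Cons:
  assumes "\<forall>j\<in>set js. j \<le> r" "3 \<le> k" "odd k" "k \<le> N"
  shows "Eprod_entry js N (Suc r) (k # a) (l # b) = (if k = l then Eprod_entry js (N - k) r a b else 0)"
  using assms(1)
proof (induction js arbitrary: a)
  case Nil
  show ?case by (simp add: Eprod_entry_def)
next
  case (Cons j js)
  let ?A = "Eprod_entry js N (Suc r)"
  have "Eprod_entry (j # js) N (Suc r) (k # a) (l # b)
      = (\<Sum>p\<in>S N (Suc r). Ej_entry j (Suc r) (k # a) p * ?A p (l # b))"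
    by (simp add: Eprod_entry_def)
  also have "\<dots> = (\<Sum>q\<in>S (N - k) r. Ej_entry j (Suc r) (k # a) (k # q) * ?A (k # q) (l # b))"
  proof (rule sum_S_Suc_hd[OF assms(2-4)])
    fix p assume "p \<in> S N (Suc r)" "hd p \<noteq> k"
    then obtain x xs where "p = x # xs" "x \<noteq> k"
      by (cases p) (auto simp: S_def)
    then show "Ej_entry j (Suc r) (k # a) p * ?A p (l # b) = 0"
      using Cons.prems by (simp add: Ej_entry_Cons)
  qed
  also have "\<dots> = (if k = l then Eprod_entry (j # js) (N - k) r a b else 0)"
    using Cons by (simp add: Ej_entry_Cons Eprod_entry_def)
  finally show ?case .
qed

lemma kernel_dim_Eprod_Suc:
  assumes "k \<le> r"
  shows "kernel_dim (Eprod k N (Suc r))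
       = (\<Sum>h | 3 \<le> h \<and> odd h \<and> h \<le> N. kernel_dim (Eprod k (N - h) r))"
proof -
  define js where "js = [2..<k + 1]"
  define hs where "hs = rev (filter odd [3..<Suc N])"
  define B where "B h = map (Cons h) (Slist (N - h) r)" for h
  have set_hs: "set hs = {h. 3 \<le> h \<and> odd h \<and> h \<le> N}"
    unfolding hs_def by auto
  have blocks: "Eprod_entry js N (Suc r) (h # a) (l # b)
      = (if h = l then Eprod_entry js (N - h) r a b else 0)" if "h \<in> set hs" for h l a b
    using assms that by (intro Eprod_entry_Cons) (auto simp: js_def set_hs)
  have "kernel_dim (Eprod k N (Suc r))
      = kernel_dim (list_mat (Eprod_entry js N (Suc r)) (concat (map B hs)))"
    unfolding Eprod_eq_Sidx_mat Sidx_mat_eq_list_mat Slist_Suc hs_def B_def js_def ..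
  also have "\<dots> = (\<Sum>h\<leftarrow>hs. kernel_dim (list_mat (Eprod_entry js N (Suc r)) (B h)))"
  proof (rule kernel_dim_list_mat_concat)
    show "distinct hs"
      by (simp add: hs_def)
    fix h l a b assume "h \<in> set hs" "h \<noteq> l" "a \<in> set (B h)" "b \<in> set (B l)"
    then show "Eprod_entry js N (Suc r) a b = 0"
      using blocks by (auto simp: B_def)
  qed
  also have "\<dots> = (\<Sum>h\<leftarrow>hs. kernel_dim (Eprod k (N - h) r))"
    unfolding Eprod_eq_Sidx_mat Sidx_mat_eq_list_mat js_def[symmetric]
    by (intro arg_cong[where f = sum_list] map_cong refl) (simp add: B_def list_mat_map blocks)
  also have "\<dots> = (\<Sum>h | 3 \<le> h \<and> odd h \<and> h \<le> N. kernel_dim (Eprod k (N - h) r))"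
    by (simp add: sum_list_distinct_conv_sum_set hs_def flip: set_hs)
  finally show ?thesis .
qed

lemma fps_nth_obs: "fps_nth obs n = (if 3 \<le> n \<and> odd n then 1 else 0)"
proof -
  define A :: "rat fps" where "A = Abs_fps (\<lambda>n. if 3 \<le> n \<and> odd n then 1 else 0)"
  have "A * (1 - fps_X ^ 2) = fps_X ^ 3"
  proof (rule fps_ext)
    fix n
    have "odd n \<Longrightarrow> 3 \<le> n \<Longrightarrow> n = 3 \<or> 3 \<le> n - 2" for n :: nat
      by presburger
    then show "fps_nth (A * (1 - fps_X ^ 2)) n = fps_nth (fps_X ^ 3) n"
      by (auto simp: A_def right_diff_distrib fps_X_power_mult_right_nth fps_X_power_nth)
  qed
  moreover have "(1 - fps_X ^ 2 :: rat fps) \<noteq> 0"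
    using fps_nonzero_nth[of "1 - fps_X ^ 2 :: rat fps"] by (auto intro!: exI[of _ 0])
  ultimately have "obs = A"
    unfolding obs_def by (metis nonzero_mult_div_cancel_right)
  then have "fps_nth obs n = fps_nth A n"
    by simp
  then show ?thesis
    by (simp add: A_def)
qed

lemma fps_nth_obs_mult:
  "fps_nth (obs * G) N = (\<Sum>h | 3 \<le> h \<and> odd h \<and> h \<le> N. fps_nth G (N - h))"
proof -
  have "fps_nth (obs * G) N = (\<Sum>h\<in>{0..N}. if 3 \<le> h \<and> odd h then fps_nth G (N - h) else 0)"
    by (auto simp: fps_mult_nth fps_nth_obs intro!: sum.cong)
  also have "\<dots> = (\<Sum>h | 3 \<le> h \<and> odd h \<and> h \<le> N. fps_nth G (N - h))"
    by (subst sum.inter_filter[symmetric]) (auto intro: sum.cong)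
  finally show ?thesis .
qed

theorem corollary4p3:
  fixes r :: nat
  assumes "r \<ge> 3"
  shows "Abs_fps (\<lambda>N. if N > 0 then of_nat (kernel_dim (Eprod (r - 1) N r)) else 0)
       = obs * Abs_fps (\<lambda>N. if N > 0 then of_nat (kernel_dim (C_mat N (r - 1))) else (0::rat))"
proof -
  define s where "s = r - 1"
  have r: "r = Suc s" and s: "2 \<le> s"
    using assms by (auto simp: s_def)
  have "S 0 s = {}"
    using S_zero[of "s - 1"] s by simp
  then have C_zero: "kernel_dim (C_mat 0 s) = 0"
    by (intro kernel_dim_dim_col_0) (simp add: C_mat_def E_mat_def dim_col_Sidx_mat)
  have E_zero: "kernel_dim (Eprod s 0 r) = 0"
    unfolding r by (intro kernel_dim_dim_col_0) (simp add: Eprod_eq_Sidx_mat dim_col_Sidx_mat S_zero)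
  have "kernel_dim (Eprod s N r) = (\<Sum>h | 3 \<le> h \<and> odd h \<and> h \<le> N. kernel_dim (C_mat (N - h) s))"
    for N unfolding r kernel_dim_Eprod_Suc[OF order_refl] using Eprod_eq_C_mat[OF s] by simp
  then show ?thesis
    using C_zero E_zero
    by (intro fps_ext) (auto simp: fps_nth_obs_mult of_nat_sum s_def intro!: sum.cong)
qed

end
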